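(* The algebra $(\mathcal{T}_\bullet,\hat{\ast})$ is a free associative algebra, freely generated by the set of non-empty reduced set compositions in $\mathsf{Comp}=\bigcup_{n\ge0}\mathsf{Comp}_n$.
   Context: $[n]=\{1,\ldots,n\}$. A set composition of a finite set $S\subset\mathbb{N}$ is a tuple $(P_1,\ldots,P_k)$ of pairwise disjoint non-empty subsets with union $S$; $\mathsf{Comp}_n$ is the set of set compositions of $[n]$ ($\mathsf{Comp}_0=\{\text{empty tuple}\}$). $\mathcal{T}_n$ is the free $\mathbb{Z}$-module on $\mathsf{Comp}_n$, $\mathcal{T}_\bullet=\bigoplus_{n\ge0}\mathcal{T}_n$. For finite $S,T\subset\mathbb{N}$ with $|S|=|T|$, $\mathsf{is}_{S,T}$ maps a set composition of $S$ to one of $T$ by applying the order-preserving bijection $S\to T$ blockwise. For set compositions $P$ of $S$ and $Q$ of $T$ with $S\cap T=\emptyset$, $P\ast Q$ is the concatenated tuple. The symmetrized product is defined bilinearly, for $P\in\mathsf{Comp}_p$, $Q\in\mathsf{Comp}_q$, by $P\,\hat{\ast}\,Q=\sum\mathsf{is}_{[p],A}(P)\ast\mathsf{is}_{[q],B}(Q)$, summed over all ordered pairs $(A,B)$ with $A\sqcup B=[p+q]$, $|A|=p$, $|B|=q$; its unit is the empty tuple. A set composition $(P_1,\ldots,P_k)\in\mathsf{Comp}_n$ is reduced if there is no $(a,m)$ with $1\le a<k$, $m<n$ and $P_1\cup\cdots\cup P_a=[m]$. *)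

theory Defs
  imports Main
begin

definition is_setcomp :: "nat set \<Rightarrow> nat set list \<Rightarrow> bool" where
  "is_setcomp S P \<longleftrightarrow>
     (\<forall>B\<in>set P. B \<noteq> {}) \<and>
     (\<forall>i<length P. \<forall>j<length P. i \<noteq> j \<longrightarrow> P ! i \<inter> P ! j = {}) \<and>
     \<Union>(set P) = S"

definition Comp :: "nat \<Rightarrow> nat set list set" where
  "Comp n = {P. is_setcomp {1..n} P}"

text \<open>Order-preserving bijection S -> T (for finite S, T of equal cardinality), applied blockwise.\<close>
definition ordmap :: "nat set \<Rightarrow> nat set \<Rightarrow> nat \<Rightarrow> nat" where
  "ordmap S T x = sorted_list_of_set T ! card {y\<in>S. y < x}"

definition is_map :: "nat set \<Rightarrow> nat set \<Rightarrow> nat set list \<Rightarrow> nat set list" where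
  "is_map S T P = map (\<lambda>B. ordmap S T ` B) P"

text \<open>Elements of T_bullet: finitely supported integer-valued functions on set compositions.\<close>
definition supp :: "('a \<Rightarrow> int) \<Rightarrow> 'a set" where
  "supp f = {x. f x \<noteq> 0}"

definition Tmod :: "(nat set list \<Rightarrow> int) set" where
  "Tmod = {f. finite (supp f) \<and> (\<forall>P. f P \<noteq> 0 \<longrightarrow> (\<exists>n. P \<in> Comp n))}"

definition basis :: "nat set list \<Rightarrow> nat set list \<Rightarrow> int" where
  "basis P = (\<lambda>R. if R = P then 1 else 0)"

text \<open>Symmetrized product of basis elements P in Comp_p, Q in Comp_q: the coefficient of R is
  the number of subsets A of [p+q] with |A| = p (B = [p+q] - A) producing R.\<close>
definition shp :: "nat set list \<Rightarrow> nat set list \<Rightarrow> nat set list \<Rightarrow> int" where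
  "shp P Q = (let p = card (\<Union>(set P)); q = card (\<Union>(set Q)) in
     (\<lambda>R. int (card {A. A \<subseteq> {1..p+q} \<and> card A = p \<and>
        R = is_map {1..p} A P @ is_map {1..q} ({1..p+q} - A) Q})))"

definition sprod :: "(nat set list \<Rightarrow> int) \<Rightarrow> (nat set list \<Rightarrow> int) \<Rightarrow> nat set list \<Rightarrow> int" where
  "sprod f g = (\<lambda>R. \<Sum>P\<in>supp f. \<Sum>Q\<in>supp g. f P * g Q * shp P Q R)"

definition sunit :: "nat set list \<Rightarrow> int" where
  "sunit = basis []"

definition reduced :: "nat \<Rightarrow> nat set list \<Rightarrow> bool" where
  "reduced n P \<longleftrightarrow> P \<in> Comp n \<and>
     \<not> (\<exists>a m. 1 \<le> a \<and> a < length P \<and> m < n \<and> \<Union>(set (take a P)) = {1..m})"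

definition Gens :: "nat set list set" where
  "Gens = {P. \<exists>n. P \<noteq> [] \<and> reduced n P}"

text \<open>Free associative algebra Z<Gens>: finitely supported integer functions on words over Gens.\<close>
definition Words :: "(nat set list list \<Rightarrow> int) set" where
  "Words = {c. finite (supp c) \<and> (\<forall>w. c w \<noteq> 0 \<longrightarrow> set w \<subseteq> Gens)}"

definition wprod :: "nat set list list \<Rightarrow> nat set list \<Rightarrow> int" where
  "wprod w = foldr sprod (map basis w) sunit"

definition Phi :: "(nat set list list \<Rightarrow> int) \<Rightarrow> nat set list \<Rightarrow> int" where
  "Phi c = (\<lambda>R. \<Sum>w\<in>supp c. c w * wprod w R)"

end

theory Submission
  imports Defs
begin

(* The subset A in the definition of the symmetrized product is determined by the term it
   produces: it is the union of the first |P| blocks. So the product of two set compositions P, Q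
   is the multiplicity-free sum of the compositions whose first |P| blocks standardize to P and
   whose remaining blocks standardize to Q, and both bracketings of a triple product select the
   compositions whose three consecutive segments standardize to the three factors.

   Call 0 < a < length R a cut of R if the first a blocks of R exhaust an initial interval [m];
   R is reduced iff it has no cuts. Cutting at all cuts factors every set composition uniquely as a shifted
   concatenation g1 | ... | gk of reduced ones, and every other term of the product
   g1 * ... * gk has fewer than k - 1 cuts. The map from words in reduced compositions is thus
   unitriangular with respect to the number of factors, hence bijective. *)

section \<open>Order-preserving bijections between finite sets of naturals\<close>

lemma sorted_list_of_set_nth_card_less:
  assumes "finite T" "t \<in> T"
  shows "sorted_list_of_set T ! card {z\<in>T. z < t} = (t::nat)"
proof -
  let ?xs = "sorted_list_of_set T"
  have sorted: "sorted_wrt (<) ?xs" by (simp add: strict_sorted_list_of_set)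
  have set_xs: "set ?xs = T" using assms by simp
  obtain i where i: "i < length ?xs" "?xs ! i = t" by (metis in_set_conv_nth set_xs assms(2))
  have "{z\<in>T. z < t} = set (take i ?xs)"
  proof (intro set_eqI iffI)
    fix z assume "z \<in> {z\<in>T. z < t}"
    then obtain j where j: "j < length ?xs" "?xs ! j = z" "z < t"
      by (metis (mono_tags, lifting) in_set_conv_nth mem_Collect_eq set_xs)
    have "j < i"
      using sorted i j by (metis not_less_iff_gr_or_eq sorted_wrt_nth_less)
    then show "z \<in> set (take i ?xs)" using j by (auto simp: in_set_conv_nth)
  next
    fix z assume "z \<in> set (take i ?xs)"
    then obtain j where "j < i" "?xs ! j = z" using i by (auto simp: in_set_conv_nth)
    then show "z \<in> {z\<in>T. z < t}"
      using sorted i set_xs by (metis mem_Collect_eq nth_mem order.strict_trans sorted_wrt_nth_less)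
  qed
  then have "card {z\<in>T. z < t} = i" using i by (simp add: distinct_card)
  then show ?thesis using i by simp
qed

lemma card_elems_below_less:
  assumes "finite S" "(x::nat) \<in> S"
  shows "card {z\<in>S. z < x} < card S"
  by (rule psubset_card_mono[OF assms(1)]) (use assms(2) in auto)

lemma card_elems_below_strict_mono:
  assumes "finite S" "x \<in> S" "(x::nat) < y"
  shows "card {z\<in>S. z < x} < card {z\<in>S. z < y}"
  by (rule psubset_card_mono) (use assms in auto)

lemma ordmap_strict_mono_on:
  assumes "finite S" "finite T" "card S = card T"
  shows "strict_mono_on S (ordmap S T)"
proof (rule strict_mono_onI)
  fix x y assume "x \<in> S" "y \<in> S" "x < y"
  let ?xs = "sorted_list_of_set T"
  have "card {z\<in>S. z < x} < card {z\<in>S. z < y}"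
    using assms(1) \<open>x \<in> S\<close> \<open>x < y\<close> by (rule card_elems_below_strict_mono)
  moreover have "card {z\<in>S. z < y} < length ?xs"
    using card_elems_below_less[OF assms(1) \<open>y \<in> S\<close>] assms by simp
  moreover have "sorted_wrt (<) ?xs" by (rule strict_sorted_list_of_set)
  ultimately have "?xs ! card {z\<in>S. z < x} < ?xs ! card {z\<in>S. z < y}"
    using sorted_wrt_nth_less by blast
  then show "ordmap S T x < ordmap S T y" unfolding ordmap_def .
qed

lemma ordmap_image:
  assumes "finite S" "finite T" "card S = card T"
  shows "ordmap S T ` S = T"
proof (rule card_subset_eq[OF assms(2)])
  show "ordmap S T ` S \<subseteq> T"
  proof
    fix z assume "z \<in> ordmap S T ` S"
    then obtain x where x: "x \<in> S" "z = sorted_list_of_set T ! card {y\<in>S. y < x}"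
      unfolding ordmap_def by auto
    have "card {y\<in>S. y < x} < length (sorted_list_of_set T)"
      using card_elems_below_less[OF assms(1) x(1)] assms by simp
    then have "z \<in> set (sorted_list_of_set T)" using x(2) by simp
    then show "z \<in> T" using assms(2) by simp
  qed
  show "card (ordmap S T ` S) = card T"
    using card_image[OF strict_mono_on_imp_inj_on[OF ordmap_strict_mono_on[OF assms]]] assms(3)
    by simp
qed

lemma ordmap_eq_strict_mono:
  assumes "finite S" "strict_mono_on S f" "f ` S = T" "x \<in> S"
  shows "ordmap S T x = (f x :: nat)"
proof -
  have inj: "inj_on f S" using assms(2) by (rule strict_mono_on_imp_inj_on)
  have "f ` {y\<in>S. y < x} = {z\<in>T. z < f x}"
  proof (intro set_eqI iffI)
    fix z assume "z \<in> f ` {y\<in>S. y < x}"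
    then show "z \<in> {z\<in>T. z < f x}" using assms strict_mono_onD[OF assms(2)] by auto
  next
    fix z assume "z \<in> {z\<in>T. z < f x}"
    then obtain y where y: "y \<in> S" "z = f y" "f y < f x" using assms(3) by auto
    then have "y < x" using strict_mono_on_less[OF assms(2) y(1) assms(4)] by simp
    then show "z \<in> f ` {y\<in>S. y < x}" using y by auto
  qed
  then have "card {z\<in>T. z < f x} = card {y\<in>S. y < x}"
    using card_image[OF inj_on_subset[OF inj]] by (metis (no_types, lifting) mem_Collect_eq subsetI)
  moreover have "finite T" "f x \<in> T" using assms by auto
  ultimately show ?thesis
    unfolding ordmap_def using sorted_list_of_set_nth_card_less by metis
qed

lemma ordmap_self: "finite S \<Longrightarrow> x \<in> S \<Longrightarrow> ordmap S S x = x"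
  using ordmap_eq_strict_mono[of S "\<lambda>x. x" S x] by (simp add: strict_mono_on_ident)

section \<open>Set compositions as lists of blocks\<close>

abbreviation ground :: "nat set list \<Rightarrow> nat set" where
  "ground X \<equiv> \<Union>(set X)"

lemma ground_map_image: "ground (map (image f) X) = f ` ground X"
  by auto

lemma ground_take_subset: "ground (take a X) \<subseteq> ground X"
  by (meson Union_mono set_take_subset)

lemma ground_drop_subset: "ground (drop a X) \<subseteq> ground X"
  by (meson Union_mono set_drop_subset)

lemma ground_take_Un_drop: "ground (take a X) \<union> ground (drop a X) = ground X"
  by (metis Union_Un_distrib append_take_drop_id set_append)

lemma finite_ground_take: "finite (ground X) \<Longrightarrow> finite (ground (take a X))"
  by (rule finite_subset[OF ground_take_subset])

lemma finite_ground_drop: "finite (ground X) \<Longrightarrow> finite (ground (drop a X))"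
  by (rule finite_subset[OF ground_drop_subset])

primrec valid_blocks :: "nat set list \<Rightarrow> bool" where
  "valid_blocks [] \<longleftrightarrow> True"
| "valid_blocks (B # X) \<longleftrightarrow> B \<noteq> {} \<and> B \<inter> ground X = {} \<and> valid_blocks X"

lemma pairwise_disjoint_nth_Cons:
  "(\<forall>i<length (B # X). \<forall>j<length (B # X). i \<noteq> j \<longrightarrow> (B # X) ! i \<inter> (B # X) ! j = {}) \<longleftrightarrow>
     B \<inter> ground X = {} \<and> (\<forall>i<length X. \<forall>j<length X. i \<noteq> j \<longrightarrow> X ! i \<inter> X ! j = {})"
proof -
  have "B \<inter> ground X = {} \<longleftrightarrow> (\<forall>C\<in>set X. B \<inter> C = {})"
    by blast
  also have "\<dots> \<longleftrightarrow> (\<forall>j<length X. B \<inter> X ! j = {})"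
    by (rule all_set_conv_all_nth)
  finally show ?thesis by (simp add: All_less_Suc2 Int_commute) meson
qed

lemma is_setcomp_iff: "is_setcomp S X \<longleftrightarrow> valid_blocks X \<and> ground X = S"
proof -
  have "valid_blocks X \<longleftrightarrow> (\<forall>B\<in>set X. B \<noteq> {}) \<and>
      (\<forall>i<length X. \<forall>j<length X. i \<noteq> j \<longrightarrow> X ! i \<inter> X ! j = {})"
  proof (induction X)
    case (Cons B X)
    then show ?case using pairwise_disjoint_nth_Cons[of B X] by auto
  qed simp
  then show ?thesis unfolding is_setcomp_def by blast
qed

lemma Comp_iff: "X \<in> Comp n \<longleftrightarrow> valid_blocks X \<and> ground X = {1..n}"
  unfolding Comp_def by (simp add: is_setcomp_iff)

lemma Nil_in_Comp: "[] \<in> Comp 0"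
  by (simp add: Comp_iff)

lemma valid_blocks_append:
  "valid_blocks (X @ Y) \<longleftrightarrow> valid_blocks X \<and> valid_blocks Y \<and> ground X \<inter> ground Y = {}"
  by (induction X) auto

lemma valid_blocks_map_image:
  assumes "inj_on f (ground X)" "valid_blocks X"
  shows "valid_blocks (map (image f) X)"
  using assms
proof (induction X)
  case (Cons B X)
  then have "inj_on f (ground X)" by (auto intro: inj_on_subset)
  moreover have "f ` B \<inter> f ` ground X = f ` (B \<inter> ground X)"
    using Cons.prems(1) by (intro inj_on_image_Int[symmetric]) auto
  ultimately show ?case using Cons by (auto simp del: Union_iff)
qed simp

lemma Comp_card: "X \<in> Comp n \<Longrightarrow> card (ground X) = n"
  by (simp add: Comp_iff)

lemma Comp_finite_ground: "X \<in> Comp n \<Longrightarrow> finite (ground X)"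
  by (simp add: Comp_iff)

lemma valid_blocks_nonempty: "valid_blocks X \<Longrightarrow> B \<in> set X \<Longrightarrow> B \<noteq> {}"
  by (induction X) auto

section \<open>Standardization and shifting\<close>

definition std :: "nat set list \<Rightarrow> nat set list" where
  "std X = is_map (ground X) {1..card (ground X)} X"

definition shift :: "nat \<Rightarrow> nat set list \<Rightarrow> nat set list" where
  "shift m X = map (image ((+) m)) X"

lemma std_eq_map: "std X = map (image (ordmap (ground X) {1..card (ground X)})) X"
  unfolding std_def is_map_def by simp

lemma length_std [simp]: "length (std X) = length X"
  by (simp add: std_eq_map)

lemma std_Nil [simp]: "std [] = []"
  by (simp add: std_eq_map)

lemma std_strict_mono_on:
  "finite (ground X) \<Longrightarrow> strict_mono_on (ground X) (ordmap (ground X) {1..card (ground X)})"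
  by (simp add: ordmap_strict_mono_on)

lemma ground_std: "finite (ground X) \<Longrightarrow> ground (std X) = {1..card (ground X)}"
  unfolding std_eq_map ground_map_image by (simp add: ordmap_image)

lemma std_map_strict_mono:
  assumes "finite (ground X)" "strict_mono_on (ground X) f"
  shows "std (map (image f) X) = std X"
proof -
  let ?U = "ground X" let ?k = "card ?U"
  let ?g = "ordmap (f ` ?U) {1..?k}"
  have card_f: "card (f ` ?U) = ?k"
    using card_image[OF strict_mono_on_imp_inj_on[OF assms(2)]] .
  have "strict_mono_on (f ` ?U) ?g" "?g ` f ` ?U = {1..?k}"
    using card_f assms(1) by (simp_all add: ordmap_strict_mono_on ordmap_image)
  then have "strict_mono_on ?U (?g \<circ> f)" "(?g \<circ> f) ` ?U = {1..?k}"
    using assms(2) by (auto simp: strict_mono_on_def image_comp)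
  then have eq: "ordmap ?U {1..?k} x = ?g (f x)" if "x \<in> ?U" for x
    using ordmap_eq_strict_mono[OF assms(1) _ _ that] by simp
  have "?g ` f ` B = ordmap ?U {1..?k} ` B" if "B \<in> set X" for B
    unfolding image_comp
  proof (rule image_cong[OF refl])
    fix x assume "x \<in> B"
    then have "x \<in> ?U" using that by blast
    then show "(?g \<circ> f) x = ordmap ?U {1..?k} x" using eq by simp
  qed
  then show ?thesis
    unfolding std_eq_map ground_map_image card_f by simp
qed

lemma std_eq_self:
  assumes "ground X = {1..k}"
  shows "std X = X"
  unfolding std_eq_map
proof (rule map_idI)
  fix B assume "B \<in> set X"
  moreover have "finite (ground X)" using assms by simp
  ultimately have "\<forall>x\<in>B. ordmap (ground X) (ground X) x = x"
    using ordmap_self[of "ground X"] by blast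
  then show "ordmap (ground X) {1..card (ground X)} ` B = B"
    using assms by simp
qed

lemma std_take:
  assumes "finite (ground X)"
  shows "std (take a (std X)) = std (take a X)"
proof -
  have "strict_mono_on (ground (take a X)) (ordmap (ground X) {1..card (ground X)})"
    using std_strict_mono_on[OF assms] ground_take_subset by (rule monotone_on_subset)
  then show ?thesis
    unfolding std_eq_map[of X] take_map
    by (rule std_map_strict_mono[OF finite_ground_take[OF assms]])
qed

lemma std_drop:
  assumes "finite (ground X)"
  shows "std (drop a (std X)) = std (drop a X)"
proof -
  have "strict_mono_on (ground (drop a X)) (ordmap (ground X) {1..card (ground X)})"
    using std_strict_mono_on[OF assms] ground_drop_subset by (rule monotone_on_subset)
  then show ?thesis
    unfolding std_eq_map[of X] drop_map
    by (rule std_map_strict_mono[OF finite_ground_drop[OF assms]])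
qed

lemma std_inverse:
  assumes "finite (ground X)"
  shows "map (image (ordmap {1..card (ground X)} (ground X))) (std X) = X"
proof -
  let ?U = "ground X" let ?k = "card ?U"
  let ?g = "ordmap ?U {1..?k}" and ?h = "ordmap {1..?k} ?U"
  have g: "strict_mono_on ?U ?g" "?g ` ?U = {1..?k}"
    using assms by (simp_all add: ordmap_strict_mono_on ordmap_image)
  have h: "strict_mono_on {1..?k} ?h" "?h ` {1..?k} = ?U"
    using assms by (simp_all add: ordmap_strict_mono_on ordmap_image)
  have "strict_mono_on ?U (?h \<circ> ?g)"
  proof (rule strict_mono_onI)
    fix r s assume "r \<in> ?U" "s \<in> ?U" "r < s"
    moreover have "?g r \<in> {1..?k}" "?g s \<in> {1..?k}"
      using g(2) \<open>r \<in> ?U\<close> \<open>s \<in> ?U\<close> by blast+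
    ultimately show "(?h \<circ> ?g) r < (?h \<circ> ?g) s"
      using strict_mono_onD[OF g(1)] strict_mono_onD[OF h(1)] by (simp del: Union_iff)
  qed
  moreover have "(?h \<circ> ?g) ` ?U = ?U" using g(2) h(2) by (metis image_comp)
  ultimately have id: "?h (?g x) = x" if "x \<in> ?U" for x
    using ordmap_eq_strict_mono[OF assms _ _ that] ordmap_self[OF assms that] by simp
  show ?thesis
    unfolding std_eq_map map_map
  proof (rule map_idI)
    fix B assume "B \<in> set X"
    then have "\<forall>x\<in>B. ?h (?g x) = x" using id by blast
    then show "(image ?h \<circ> image ?g) B = B" by (simp add: image_comp)
  qed
qed

lemma ground_shift: "ground (shift m X) = (+) m ` ground X"
  unfolding shift_def by auto

lemma length_shift [simp]: "length (shift m X) = length X"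
  by (simp add: shift_def)

lemma shift_inj: "shift m X = shift m Y \<Longrightarrow> X = Y"
  unfolding shift_def by (simp add: inj_image_eq_iff inj_on_def)

lemma std_shift: "finite (ground X) \<Longrightarrow> std (shift m X) = std X"
  unfolding shift_def by (rule std_map_strict_mono) (auto intro: strict_mono_onI)

lemma shift_std_eq:
  assumes "ground Y = {m+1..m+k}"
  shows "shift m (std Y) = Y"
proof -
  have fin: "finite (ground Y)" and card: "card (ground Y) = k" using assms by simp_all
  have "ordmap {1..k} (ground Y) x = m + x" if "x \<in> {1..k}" for x
    using that assms by (intro ordmap_eq_strict_mono) (auto intro: strict_mono_onI)
  then have "ordmap {1..k} (ground Y) ` B = (+) m ` B" if "B \<subseteq> {1..k}" for B
    using that by (intro image_cong) auto
  moreover have "\<forall>B\<in>set (std Y). B \<subseteq> {1..k}" using ground_std[OF fin] card by auto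
  ultimately have "map (image ((+) m)) (std Y) = map (image (ordmap {1..k} (ground Y))) (std Y)"
    by (intro map_cong) auto
  also have "\<dots> = Y" using std_inverse[OF fin] card by simp
  finally show ?thesis unfolding shift_def .
qed

lemma ground_shift_Comp: "X \<in> Comp k \<Longrightarrow> ground (shift m X) = {m+1..m+k}"
  by (simp add: ground_shift Comp_iff image_add_atLeastAtMost)

lemma card_ground_std: "finite (ground X) \<Longrightarrow> card (ground (std X)) = card (ground X)"
  by (simp add: ground_std)

lemma Comp_std_eq: "X \<in> Comp n \<Longrightarrow> std X = X"
  unfolding Comp_iff using std_eq_self by blast

lemma std_in_Comp:
  assumes "finite (ground X)" "valid_blocks X"
  shows "std X \<in> Comp (card (ground X))"
  unfolding Comp_iff std_eq_map
  using valid_blocks_map_image[OF strict_mono_on_imp_inj_on[OF std_strict_mono_on[OF assms(1)]] assms(2)]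
    ground_std[OF assms(1)] by (simp add: std_eq_map)

lemma
  assumes "T \<in> Comp N"
  shows std_take_in_Comp: "std (take a T) \<in> Comp (card (ground (take a T)))"
    and std_drop_in_Comp: "std (drop a T) \<in> Comp (card (ground (drop a T)))"
    and card_ground_take_drop: "card (ground (take a T)) + card (ground (drop a T)) = N"
    and ground_take_drop_disjoint: "ground (take a T) \<inter> ground (drop a T) = {}"
proof -
  have fin: "finite (ground T)" and valid: "valid_blocks (take a T @ drop a T)"
    using assms by (simp_all add: Comp_iff)
  then show "std (take a T) \<in> Comp (card (ground (take a T)))"
    and "std (drop a T) \<in> Comp (card (ground (drop a T)))"
    and disj: "ground (take a T) \<inter> ground (drop a T) = {}"
    by (auto intro!: std_in_Comp finite_ground_take finite_ground_drop
        simp: valid_blocks_append simp del: append_take_drop_id)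
  have "card (ground T) = card (ground (take a T)) + card (ground (drop a T))"
    using card_Un_disjoint[OF finite_ground_take[OF fin] finite_ground_drop[OF fin] disj]
    by (simp add: ground_take_Un_drop)
  then show "card (ground (take a T)) + card (ground (drop a T)) = N"
    using assms by (simp add: Comp_iff)
qed

section \<open>The product of two set compositions\<close>

lemma length_is_map [simp]: "length (is_map S T P) = length P"
  by (simp add: is_map_def)

definition is_shuffle :: "nat set list \<Rightarrow> nat set list \<Rightarrow> nat set list \<Rightarrow> bool" where
  "is_shuffle P Q R \<longleftrightarrow> (\<exists>N. R \<in> Comp N) \<and> length R = length P + length Q
     \<and> std (take (length P) R) = P \<and> std (drop (length P) R) = Q"

lemma
  assumes "P \<in> Comp p" "finite A" "card A = p"
  shows ground_is_map: "ground (is_map {1..p} A P) = A"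
    and std_is_map: "std (is_map {1..p} A P) = P"
    and valid_blocks_is_map: "valid_blocks (is_map {1..p} A P)"
proof -
  have mono: "strict_mono_on {1..p} (ordmap {1..p} A)" and onto: "ordmap {1..p} A ` {1..p} = A"
    using assms by (simp_all add: ordmap_strict_mono_on ordmap_image)
  have P: "ground P = {1..p}" "valid_blocks P" using assms(1) by (simp_all add: Comp_iff)
  show "ground (is_map {1..p} A P) = A"
    unfolding is_map_def ground_map_image P onto ..
  show "std (is_map {1..p} A P) = P"
    unfolding is_map_def using std_map_strict_mono[of P] mono P Comp_std_eq[OF assms(1)] by simp
  show "valid_blocks (is_map {1..p} A P)"
    unfolding is_map_def using valid_blocks_map_image strict_mono_on_imp_inj_on[OF mono] P by simp
qed

lemma is_shuffle_if_shp_witness: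
  assumes P: "P \<in> Comp p" and Q: "Q \<in> Comp q"
    and A: "A \<subseteq> {1..p+q}" "card A = p"
    and R: "R = is_map {1..p} A P @ is_map {1..q} ({1..p+q} - A) Q"
  shows "is_shuffle P Q R" "A = ground (take (length P) R)"
proof -
  let ?B = "{1..p+q} - A"
  have "finite A" using A(1) finite_subset by blast
  have "card ?B = q" using A \<open>finite A\<close> by (simp add: card_Diff_subset)
  note ground = ground_is_map[OF P \<open>finite A\<close> A(2)] ground_is_map[OF Q _ \<open>card ?B = q\<close>]
    and std = std_is_map[OF P \<open>finite A\<close> A(2)] std_is_map[OF Q _ \<open>card ?B = q\<close>]
    and valid = valid_blocks_is_map[OF P \<open>finite A\<close> A(2)] valid_blocks_is_map[OF Q _ \<open>card ?B = q\<close>]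
  have "R \<in> Comp (p+q)"
    unfolding Comp_iff R using ground valid A(1) by (auto simp: valid_blocks_append)
  then show "is_shuffle P Q R"
    unfolding is_shuffle_def R using std by auto
  show "A = ground (take (length P) R)"
    using ground R by simp
qed

lemma shp_witness_if_is_shuffle:
  assumes P: "P \<in> Comp p" and Q: "Q \<in> Comp q" and R: "is_shuffle P Q R"
  defines "A \<equiv> ground (take (length P) R)"
  shows "A \<subseteq> {1..p+q}" "card A = p"
    "R = is_map {1..p} A P @ is_map {1..q} ({1..p+q} - A) Q"
proof -
  obtain N where N: "R \<in> Comp N" using R is_shuffle_def by blast
  let ?X = "take (length P) R" and ?Y = "drop (length P) R"
  have std: "std ?X = P" "std ?Y = Q" using R is_shuffle_def by auto
  have fin: "finite (ground ?X)" "finite (ground ?Y)"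
    using Comp_finite_ground[OF N] by (simp_all add: finite_ground_take finite_ground_drop)
  have card: "card (ground ?X) = p" "card (ground ?Y) = q"
    using card_ground_std[OF fin(1)] card_ground_std[OF fin(2)] std Comp_card[OF P] Comp_card[OF Q]
    by simp_all
  then have "N = p + q" using card_ground_take_drop[OF N, of "length P"] by simp
  then have "ground ?X \<union> ground ?Y = {1..p+q}" using N ground_take_Un_drop by (simp add: Comp_iff)
  then show "A \<subseteq> {1..p+q}" "card A = p" using card(1) unfolding A_def by auto
  have "ground ?Y = {1..p+q} - A"
    using \<open>ground ?X \<union> ground ?Y = _\<close> ground_take_drop_disjoint[OF N] unfolding A_def by blast
  then show "R = is_map {1..p} A P @ is_map {1..q} ({1..p+q} - A) Q"
    using std_inverse[OF fin(1)] std_inverse[OF fin(2)] std card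
    unfolding A_def is_map_def by simp
qed

theorem shp_eq_indicator:
  assumes "P \<in> Comp p" "Q \<in> Comp q"
  shows "shp P Q R = (if is_shuffle P Q R then 1 else 0)"
proof -
  define SA where "SA = {A. A \<subseteq> {1..p+q} \<and> card A = p \<and>
        R = is_map {1..p} A P @ is_map {1..q} ({1..p+q} - A) Q}"
  have "shp P Q R = int (card SA)"
    using assms unfolding shp_def SA_def Let_def by (simp add: Comp_iff)
  moreover have "SA = (if is_shuffle P Q R then {ground (take (length P) R)} else {})"
  proof -
    have "is_shuffle P Q R \<and> A = ground (take (length P) R)" if "A \<in> SA" for A
      using that is_shuffle_if_shp_witness[OF assms] unfolding SA_def by blast
    moreover have "ground (take (length P) R) \<in> SA" if "is_shuffle P Q R"
      using shp_witness_if_is_shuffle[OF assms that] unfolding SA_def by blast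
    ultimately show ?thesis by auto
  qed
  ultimately show ?thesis by simp
qed

section \<open>The unital associative algebra\<close>

lemma Tmod_iff: "f \<in> Tmod \<longleftrightarrow> finite (supp f) \<and> supp f \<subseteq> (\<Union>n. Comp n)"
  unfolding Tmod_def supp_def by blast

lemma supp_sum_subset: "supp (\<lambda>x. \<Sum>i\<in>I. F i x) \<subseteq> (\<Union>i\<in>I. supp (F i))"
  unfolding supp_def by (auto dest: sum.not_neutral_contains_not_neutral)

lemma supp_scale_subset: "supp (\<lambda>x. k * f x) \<subseteq> supp f"
  unfolding supp_def by auto

lemma Tmod_sum:
  assumes "finite I" "\<And>i. i \<in> I \<Longrightarrow> F i \<in> Tmod"
  shows "(\<lambda>x. \<Sum>i\<in>I. F i x) \<in> Tmod"
proof -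
  have fin: "finite (\<Union>i\<in>I. supp (F i))" and sub: "(\<Union>i\<in>I. supp (F i)) \<subseteq> (\<Union>n. Comp n)"
    using assms by (auto simp: Tmod_iff)
  show ?thesis
    unfolding Tmod_iff using finite_subset[OF supp_sum_subset fin] subset_trans[OF supp_sum_subset sub] ..
qed

lemma Tmod_scale:
  assumes "f \<in> Tmod"
  shows "(\<lambda>x. k * f x) \<in> Tmod"
proof -
  have fin: "finite (supp f)" and sub: "supp f \<subseteq> (\<Union>n. Comp n)"
    using assms by (simp_all add: Tmod_iff)
  show ?thesis
    unfolding Tmod_iff using finite_subset[OF supp_scale_subset fin] subset_trans[OF supp_scale_subset sub] ..
qed

lemma basis_in_Tmod: "P \<in> Comp n \<Longrightarrow> basis P \<in> Tmod"
  unfolding Tmod_def supp_def basis_def by auto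

lemma supp_basis [simp]: "supp (basis P) = {P}"
  unfolding supp_def basis_def by auto

lemma sunit_in_Tmod: "sunit \<in> Tmod"
  unfolding sunit_def using basis_in_Tmod[OF Nil_in_Comp] .

lemma finite_supp_shp: "finite (supp (shp P Q))"
proof -
  let ?p = "card (ground P)" and ?q = "card (ground Q)"
  let ?R = "\<lambda>A. is_map {1..?p} A P @ is_map {1..?q} ({1..?p+?q} - A) Q"
  have "supp (shp P Q) \<subseteq> ?R ` Pow {1..?p+?q}"
  proof
    fix R assume "R \<in> supp (shp P Q)"
    then have "card {A. A \<subseteq> {1..?p+?q} \<and> card A = ?p \<and> R = ?R A} \<noteq> 0"
      unfolding supp_def shp_def Let_def by simp
    then obtain A where "A \<subseteq> {1..?p+?q}" "R = ?R A"
      by (metis (mono_tags, lifting) card.empty empty_Collect_eq)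
    then show "R \<in> ?R ` Pow {1..?p+?q}" by blast
  qed
  then show ?thesis by (rule finite_subset) simp
qed

lemma is_shuffle_in_Comp: "is_shuffle P Q R \<Longrightarrow> \<exists>n. R \<in> Comp n"
  unfolding is_shuffle_def by blast

lemma shp_in_Tmod:
  assumes "P \<in> Comp p" "Q \<in> Comp q"
  shows "shp P Q \<in> Tmod"
  unfolding Tmod_iff
proof
  show "supp (shp P Q) \<subseteq> (\<Union>n. Comp n)"
    using shp_eq_indicator[OF assms] is_shuffle_in_Comp by (auto simp: supp_def split: if_splits)
qed (rule finite_supp_shp)

lemma Tmod_supp_in_Comp: "f \<in> Tmod \<Longrightarrow> P \<in> supp f \<Longrightarrow> \<exists>n. P \<in> Comp n"
  unfolding Tmod_iff by blast

lemma sprod_in_Tmod: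
  assumes "f \<in> Tmod" "g \<in> Tmod"
  shows "sprod f g \<in> Tmod"
proof -
  have summand: "(\<lambda>R. f P * g Q * shp P Q R) \<in> Tmod" if PQ: "P \<in> supp f" "Q \<in> supp g" for P Q
  proof -
    obtain p q where "P \<in> Comp p" "Q \<in> Comp q" using PQ assms Tmod_supp_in_Comp by metis
    then show ?thesis using Tmod_scale[OF shp_in_Tmod, of P p Q q "f P * g Q"] by (simp add: mult.assoc)
  qed
  have "finite (supp f)" "finite (supp g)" using assms by (simp_all add: Tmod_iff)
  then show ?thesis
    unfolding sprod_def by (intro Tmod_sum summand)
qed

lemma supp_sprod_subset: "supp (sprod f g) \<subseteq> (\<Union>P\<in>supp f. \<Union>Q\<in>supp g. supp (shp P Q))"
proof -
  have "supp (sprod f g) \<subseteq> (\<Union>P\<in>supp f. supp (\<lambda>R. \<Sum>Q\<in>supp g. f P * g Q * shp P Q R))"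
    unfolding sprod_def by (rule supp_sum_subset)
  also have "\<dots> \<subseteq> (\<Union>P\<in>supp f. \<Union>Q\<in>supp g. supp (\<lambda>R. f P * g Q * shp P Q R))"
    by (intro UN_mono order_refl supp_sum_subset)
  also have "\<dots> \<subseteq> (\<Union>P\<in>supp f. \<Union>Q\<in>supp g. supp (shp P Q))"
    by (intro UN_mono order_refl) (simp add: supp_def)
  finally show ?thesis .
qed

lemma sprod_conv_sum:
  assumes "finite F" "finite G" "supp f \<subseteq> F" "supp g \<subseteq> G"
  shows "sprod f g R = (\<Sum>P\<in>F. \<Sum>Q\<in>G. f P * g Q * shp P Q R)"
proof -
  have "sprod f g R = (\<Sum>P\<in>supp f. \<Sum>Q\<in>G. f P * g Q * shp P Q R)"
    unfolding sprod_def
    by (intro sum.cong[OF refl] sum.mono_neutral_left[OF assms(2,4)]) (auto simp: supp_def)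
  also have "\<dots> = (\<Sum>P\<in>F. \<Sum>Q\<in>G. f P * g Q * shp P Q R)"
    by (rule sum.mono_neutral_left[OF assms(1,3)]) (auto simp: supp_def)
  finally show ?thesis .
qed

lemma is_shuffle_Nil_left: "Q \<in> Comp q \<Longrightarrow> is_shuffle [] Q R \<longleftrightarrow> R = Q"
  unfolding is_shuffle_def by (auto simp: Comp_std_eq)

lemma is_shuffle_Nil_right: "P \<in> Comp p \<Longrightarrow> is_shuffle P [] R \<longleftrightarrow> R = P"
  unfolding is_shuffle_def by (auto simp: Comp_std_eq)

lemma sprod_sunit_left:
  assumes "f \<in> Tmod"
  shows "sprod sunit f = f"
proof
  fix R
  have "sprod sunit f R = (\<Sum>Q\<in>supp f. f Q * shp [] Q R)"
    unfolding sprod_def sunit_def supp_basis by (simp add: basis_def)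
  also have "\<dots> = (\<Sum>Q\<in>supp f. if Q = R then f Q else 0)"
  proof (rule sum.cong[OF refl])
    fix Q assume "Q \<in> supp f"
    then obtain q where "Q \<in> Comp q" using assms Tmod_supp_in_Comp by blast
    then show "f Q * shp [] Q R = (if Q = R then f Q else 0)"
      by (auto simp: shp_eq_indicator[OF Nil_in_Comp] is_shuffle_Nil_left)
  qed
  also have "\<dots> = f R"
    using assms by (simp add: Tmod_iff supp_def)
  finally show "sprod sunit f R = f R" .
qed

lemma sprod_sunit_right:
  assumes "f \<in> Tmod"
  shows "sprod f sunit = f"
proof
  fix R
  have "sprod f sunit R = (\<Sum>P\<in>supp f. f P * shp P [] R)"
    unfolding sprod_def sunit_def supp_basis by (simp add: basis_def)
  also have "\<dots> = (\<Sum>P\<in>supp f. if P = R then f P else 0)"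
  proof (rule sum.cong[OF refl])
    fix P assume "P \<in> supp f"
    then obtain p where "P \<in> Comp p" using assms Tmod_supp_in_Comp by blast
    then show "f P * shp P [] R = (if P = R then f P else 0)"
      by (auto simp: shp_eq_indicator[OF _ Nil_in_Comp] is_shuffle_Nil_right)
  qed
  also have "\<dots> = f R"
    using assms by (simp add: Tmod_iff supp_def)
  finally show "sprod f sunit R = f R" .
qed

definition is_shuffle3 ::
    "nat set list \<Rightarrow> nat set list \<Rightarrow> nat set list \<Rightarrow> nat set list \<Rightarrow> bool" where
  "is_shuffle3 P Q S T \<longleftrightarrow> (\<exists>N. T \<in> Comp N) \<and> length T = length P + length Q + length S
     \<and> std (take (length P) T) = P \<and> std (take (length Q) (drop (length P) T)) = Q
     \<and> std (drop (length P + length Q) T) = S"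

lemma is_shuffle_assoc_left:
  "is_shuffle P Q R \<and> is_shuffle R S T \<longleftrightarrow>
     R = std (take (length P + length Q) T) \<and> is_shuffle3 P Q S T"
proof
  assume "is_shuffle P Q R \<and> is_shuffle R S T"
  then obtain N where R: "length R = length P + length Q" "std (take (length P) R) = P"
      "std (drop (length P) R) = Q"
    and T: "T \<in> Comp N" "length T = length R + length S"
      "std (take (length R) T) = R" "std (drop (length R) T) = S"
    unfolding is_shuffle_def by blast
  have fin: "finite (ground (take (length R) T))"
    using T(1) by (simp add: Comp_finite_ground finite_ground_take)
  have "std (take (length P) T) = std (take (length P) (take (length R) T))"
    using R(1) by (simp add: min_def)
  also have "\<dots> = P" using std_take[OF fin] T(3) R(2) by simp
  finally have "std (take (length P) T) = P" .
  moreover have "std (take (length Q) (drop (length P) T)) = std (drop (length P) (take (length R) T))"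
    using R(1) by (simp add: drop_take)
  moreover have "\<dots> = Q" using std_drop[OF fin] T(3) R(3) by simp
  ultimately show "R = std (take (length P + length Q) T) \<and> is_shuffle3 P Q S T"
    using R T unfolding is_shuffle3_def by auto
next
  assume "R = std (take (length P + length Q) T) \<and> is_shuffle3 P Q S T"
  then obtain N where R: "R = std (take (length P + length Q) T)"
    and T: "T \<in> Comp N" "length T = length P + length Q + length S"
      "std (take (length P) T) = P" "std (take (length Q) (drop (length P) T)) = Q"
      "std (drop (length P + length Q) T) = S"
    unfolding is_shuffle3_def by blast
  have fin: "finite (ground (take (length P + length Q) T))"
    using T(1) by (simp add: Comp_finite_ground finite_ground_take)
  have "R \<in> Comp (card (ground (take (length P + length Q) T)))"
    unfolding R using std_take_in_Comp[OF T(1)] .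
  moreover have "length R = length P + length Q" using R T(2) by simp
  moreover have "std (take (length P) R) = P"
    unfolding R using std_take[OF fin] T(3) by (simp add: min_def)
  moreover have "std (drop (length P) R) = Q"
    unfolding R using std_drop[OF fin] T(4) by (simp add: drop_take)
  ultimately show "is_shuffle P Q R \<and> is_shuffle R S T"
    unfolding is_shuffle_def using R T by auto
qed

lemma is_shuffle_assoc_right:
  "is_shuffle Q S R \<and> is_shuffle P R T \<longleftrightarrow>
     R = std (drop (length P) T) \<and> is_shuffle3 P Q S T"
proof
  assume "is_shuffle Q S R \<and> is_shuffle P R T"
  then obtain N where R: "length R = length Q + length S" "std (take (length Q) R) = Q"
      "std (drop (length Q) R) = S"
    and T: "T \<in> Comp N" "length T = length P + length R"
      "std (take (length P) T) = P" "std (drop (length P) T) = R"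
    unfolding is_shuffle_def by blast
  have fin: "finite (ground (drop (length P) T))"
    using T(1) by (simp add: Comp_finite_ground finite_ground_drop)
  have "std (take (length Q) (drop (length P) T)) = Q"
    using std_take[OF fin] T(4) R(2) by simp
  moreover have "std (drop (length P + length Q) T) = S"
    using std_drop[OF fin] T(4) R(3) by (simp add: add.commute)
  ultimately show "R = std (drop (length P) T) \<and> is_shuffle3 P Q S T"
    using R T unfolding is_shuffle3_def by auto
next
  assume "R = std (drop (length P) T) \<and> is_shuffle3 P Q S T"
  then obtain N where R: "R = std (drop (length P) T)"
    and T: "T \<in> Comp N" "length T = length P + length Q + length S"
      "std (take (length P) T) = P" "std (take (length Q) (drop (length P) T)) = Q"
      "std (drop (length P + length Q) T) = S"
    unfolding is_shuffle3_def by blast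
  have fin: "finite (ground (drop (length P) T))"
    using T(1) by (simp add: Comp_finite_ground finite_ground_drop)
  have "R \<in> Comp (card (ground (drop (length P) T)))"
    unfolding R using std_drop_in_Comp[OF T(1)] .
  moreover have "length R = length Q + length S" using R T(2) by simp
  moreover have "std (take (length Q) R) = Q"
    unfolding R using std_take[OF fin] T(4) by simp
  moreover have "std (drop (length Q) R) = S"
    unfolding R using std_drop[OF fin] T(5) by (simp add: add.commute)
  ultimately show "is_shuffle Q S R \<and> is_shuffle P R T"
    unfolding is_shuffle_def using R T by auto
qed

lemma shp_mult_shp_left:
  assumes "P \<in> Comp p" "Q \<in> Comp q" "S \<in> Comp s"
  shows "shp P Q R * shp R S T = (if is_shuffle P Q R \<and> is_shuffle R S T then 1 else 0)"
proof (cases "is_shuffle P Q R")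
  case True
  then obtain n where "R \<in> Comp n" using is_shuffle_in_Comp by blast
  then show ?thesis
    using True by (simp add: shp_eq_indicator[OF assms(1,2)] shp_eq_indicator[OF _ assms(3)])
qed (simp add: shp_eq_indicator[OF assms(1,2)])

lemma shp_mult_shp_right:
  assumes "P \<in> Comp p" "Q \<in> Comp q" "S \<in> Comp s"
  shows "shp Q S R * shp P R T = (if is_shuffle Q S R \<and> is_shuffle P R T then 1 else 0)"
proof (cases "is_shuffle Q S R")
  case True
  then obtain n where "R \<in> Comp n" using is_shuffle_in_Comp by blast
  then show ?thesis
    using True by (simp add: shp_eq_indicator[OF assms(2,3)] shp_eq_indicator[OF assms(1)])
qed (simp add: shp_eq_indicator[OF assms(2,3)])

lemma sum_shp_mult_shp_left:
  assumes "P \<in> Comp p" "Q \<in> Comp q" "S \<in> Comp s" "finite RR" "supp (shp P Q) \<subseteq> RR"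
  shows "(\<Sum>R\<in>RR. shp P Q R * shp R S T) = (if is_shuffle3 P Q S T then 1 else 0)"
proof -
  let ?R0 = "std (take (length P + length Q) T)"
  have "(\<Sum>R\<in>RR. shp P Q R * shp R S T) = (\<Sum>R\<in>RR. if R = ?R0 then (if is_shuffle3 P Q S T then 1 else 0) else 0)"
    by (intro sum.cong refl) (simp add: shp_mult_shp_left[OF assms(1-3)] is_shuffle_assoc_left)
  also have "\<dots> = (if ?R0 \<in> RR then (if is_shuffle3 P Q S T then 1 else 0) else 0)"
    using assms(4) by (rule sum.delta)
  also have "\<dots> = (if is_shuffle3 P Q S T then 1 else 0)"
  proof -
    have "?R0 \<in> supp (shp P Q)" if "is_shuffle3 P Q S T"
      using that is_shuffle_assoc_left[of P Q ?R0 S T] by (simp add: supp_def shp_eq_indicator[OF assms(1,2)])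
    then show ?thesis using assms(5) by auto
  qed
  finally show ?thesis .
qed

lemma sum_shp_mult_shp_right:
  assumes "P \<in> Comp p" "Q \<in> Comp q" "S \<in> Comp s" "finite RR" "supp (shp Q S) \<subseteq> RR"
  shows "(\<Sum>R\<in>RR. shp Q S R * shp P R T) = (if is_shuffle3 P Q S T then 1 else 0)"
proof -
  let ?R0 = "std (drop (length P) T)"
  have "(\<Sum>R\<in>RR. shp Q S R * shp P R T) = (\<Sum>R\<in>RR. if R = ?R0 then (if is_shuffle3 P Q S T then 1 else 0) else 0)"
    by (intro sum.cong refl) (simp add: shp_mult_shp_right[OF assms(1-3)] is_shuffle_assoc_right)
  also have "\<dots> = (if ?R0 \<in> RR then (if is_shuffle3 P Q S T then 1 else 0) else 0)"
    using assms(4) by (rule sum.delta)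
  also have "\<dots> = (if is_shuffle3 P Q S T then 1 else 0)"
  proof -
    have "?R0 \<in> supp (shp Q S)" if "is_shuffle3 P Q S T"
      using that is_shuffle_assoc_right[of Q S ?R0 P T] by (simp add: supp_def shp_eq_indicator[OF assms(2,3)])
    then show ?thesis using assms(5) by auto
  qed
  finally show ?thesis .
qed

lemma sum_swap_outer2:
  "(\<Sum>a\<in>A. \<Sum>b\<in>B. \<Sum>c\<in>C. h a b c) = (\<Sum>b\<in>B. \<Sum>c\<in>C. \<Sum>a\<in>A. h a b c)"
  by (subst sum.swap) (simp only: sum.swap[of _ A C])

lemma sprod_sprod_left:
  assumes "f \<in> Tmod" "g \<in> Tmod" "h \<in> Tmod"
  shows "sprod (sprod f g) h T = (\<Sum>S\<in>supp h. \<Sum>P\<in>supp f. \<Sum>Q\<in>supp g.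
           f P * g Q * h S * (if is_shuffle3 P Q S T then 1 else 0))"
proof -
  let ?RR = "\<Union>P\<in>supp f. \<Union>Q\<in>supp g. supp (shp P Q)"
  have fin: "finite (supp f)" "finite (supp g)" "finite (supp h)"
    using assms by (simp_all add: Tmod_iff)
  then have fin_RR: "finite ?RR" using finite_supp_shp by blast
  have "sprod (sprod f g) h T = (\<Sum>R\<in>?RR. \<Sum>S\<in>supp h. sprod f g R * h S * shp R S T)"
    using fin fin_RR by (intro sprod_conv_sum supp_sprod_subset order_refl)
  also have "\<dots> = (\<Sum>S\<in>supp h. \<Sum>R\<in>?RR. sprod f g R * h S * shp R S T)"
    by (rule sum.swap)
  also have "\<dots> = (\<Sum>S\<in>supp h. \<Sum>R\<in>?RR. \<Sum>P\<in>supp f. \<Sum>Q\<in>supp g.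
                     f P * g Q * h S * (shp P Q R * shp R S T))"
    by (simp add: sprod_def sum_distrib_left sum_distrib_right mult_ac)
  also have "\<dots> = (\<Sum>S\<in>supp h. \<Sum>P\<in>supp f. \<Sum>Q\<in>supp g. \<Sum>R\<in>?RR.
                     f P * g Q * h S * (shp P Q R * shp R S T))"
    by (rule sum.cong[OF refl], rule sum_swap_outer2)
  also have "\<dots> = (\<Sum>S\<in>supp h. \<Sum>P\<in>supp f. \<Sum>Q\<in>supp g.
                     f P * g Q * h S * (if is_shuffle3 P Q S T then 1 else 0))"
  proof (intro sum.cong[OF refl])
    fix S P Q assume "S \<in> supp h" "P \<in> supp f" "Q \<in> supp g"
    then obtain p q s where "P \<in> Comp p" "Q \<in> Comp q" "S \<in> Comp s"
      using assms Tmod_supp_in_Comp by metis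
    moreover have "supp (shp P Q) \<subseteq> ?RR" using \<open>P \<in> supp f\<close> \<open>Q \<in> supp g\<close> by blast
    ultimately show "(\<Sum>R\<in>?RR. f P * g Q * h S * (shp P Q R * shp R S T))
        = f P * g Q * h S * (if is_shuffle3 P Q S T then 1 else 0)"
      using sum_shp_mult_shp_left[OF _ _ _ fin_RR] by (simp add: sum_distrib_left[symmetric])
  qed
  finally show ?thesis .
qed

lemma sprod_sprod_right:
  assumes "f \<in> Tmod" "g \<in> Tmod" "h \<in> Tmod"
  shows "sprod f (sprod g h) T = (\<Sum>P\<in>supp f. \<Sum>Q\<in>supp g. \<Sum>S\<in>supp h.
           f P * g Q * h S * (if is_shuffle3 P Q S T then 1 else 0))"
proof -
  let ?RR = "\<Union>Q\<in>supp g. \<Union>S\<in>supp h. supp (shp Q S)"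
  have fin: "finite (supp f)" "finite (supp g)" "finite (supp h)"
    using assms by (simp_all add: Tmod_iff)
  then have fin_RR: "finite ?RR" using finite_supp_shp by blast
  have "sprod f (sprod g h) T = (\<Sum>P\<in>supp f. \<Sum>R\<in>?RR. f P * sprod g h R * shp P R T)"
    using fin fin_RR by (intro sprod_conv_sum supp_sprod_subset order_refl)
  also have "\<dots> = (\<Sum>P\<in>supp f. \<Sum>R\<in>?RR. \<Sum>Q\<in>supp g. \<Sum>S\<in>supp h.
                     f P * g Q * h S * (shp Q S R * shp P R T))"
    by (simp add: sprod_def sum_distrib_left sum_distrib_right mult_ac)
  also have "\<dots> = (\<Sum>P\<in>supp f. \<Sum>Q\<in>supp g. \<Sum>S\<in>supp h. \<Sum>R\<in>?RR.
                     f P * g Q * h S * (shp Q S R * shp P R T))"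
    by (rule sum.cong[OF refl], rule sum_swap_outer2)
  also have "\<dots> = (\<Sum>P\<in>supp f. \<Sum>Q\<in>supp g. \<Sum>S\<in>supp h.
                     f P * g Q * h S * (if is_shuffle3 P Q S T then 1 else 0))"
  proof (intro sum.cong[OF refl])
    fix P Q S assume "P \<in> supp f" "Q \<in> supp g" "S \<in> supp h"
    then obtain p q s where "P \<in> Comp p" "Q \<in> Comp q" "S \<in> Comp s"
      using assms Tmod_supp_in_Comp by metis
    moreover have "supp (shp Q S) \<subseteq> ?RR" using \<open>Q \<in> supp g\<close> \<open>S \<in> supp h\<close> by blast
    ultimately show "(\<Sum>R\<in>?RR. f P * g Q * h S * (shp Q S R * shp P R T))
        = f P * g Q * h S * (if is_shuffle3 P Q S T then 1 else 0)"
      using sum_shp_mult_shp_right[OF _ _ _ fin_RR] by (simp add: sum_distrib_left[symmetric])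
  qed
  finally show ?thesis .
qed

lemma sprod_assoc:
  assumes "f \<in> Tmod" "g \<in> Tmod" "h \<in> Tmod"
  shows "sprod (sprod f g) h = sprod f (sprod g h)"
proof
  fix T
  show "sprod (sprod f g) h T = sprod f (sprod g h) T"
    unfolding sprod_sprod_left[OF assms] sprod_sprod_right[OF assms] by (rule sum_swap_outer2)
qed

section \<open>Cuts and reduced set compositions\<close>

definition is_cut :: "nat set list \<Rightarrow> nat \<Rightarrow> bool" where
  "is_cut X a \<longleftrightarrow> (\<forall>x\<in>ground (take a X). \<forall>y\<in>ground (drop a X). x < y)"

definition cuts :: "nat set list \<Rightarrow> nat set" where
  "cuts X = {a. 0 < a \<and> a < length X \<and> is_cut X a}"

lemma finite_cuts [simp]: "finite (cuts X)"
  by (rule finite_subset[of _ "{..<length X}"]) (auto simp: cuts_def)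

lemma cuts_bounds: "a \<in> cuts X \<Longrightarrow> 0 < a \<and> a < length X"
  by (simp add: cuts_def)

lemma is_cut_map_strict_mono:
  assumes "strict_mono_on (ground X) f"
  shows "is_cut (map (image f) X) a \<longleftrightarrow> is_cut X a"
proof -
  have "x < y \<longleftrightarrow> f x < f y" if "x \<in> ground (take a X)" "y \<in> ground (drop a X)" for x y
    using strict_mono_on_less[OF assms] that ground_take_subset ground_drop_subset by (metis subsetD)
  then show ?thesis
    unfolding is_cut_def take_map drop_map ground_map_image by auto
qed

lemma cuts_std: "finite (ground X) \<Longrightarrow> cuts (std X) = cuts X"
  unfolding cuts_def std_eq_map using is_cut_map_strict_mono[OF std_strict_mono_on] by simp

lemma cuts_shift: "cuts (shift m X) = cuts X"
  unfolding cuts_def shift_def by (simp add: is_cut_map_strict_mono strict_mono_onI)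

lemma cuts_append_subset:
  "cuts (X @ Y) \<subseteq> insert (length X) (cuts X \<union> (+) (length X) ` cuts Y)"
proof
  fix a assume "a \<in> cuts (X @ Y)"
  then have a: "0 < a" "a < length X + length Y" and cut: "is_cut (X @ Y) a"
    unfolding cuts_def by auto
  consider "a < length X" | "a = length X" | "length X < a" by linarith
  then show "a \<in> insert (length X) (cuts X \<union> (+) (length X) ` cuts Y)"
  proof cases
    case 1
    then have "ground (drop a X) \<subseteq> ground (drop a (X @ Y))" by auto
    then have "is_cut X a" using cut 1 unfolding is_cut_def by auto
    then show ?thesis using 1 a unfolding cuts_def by auto
  next
    case 3
    then have "ground (take (a - length X) Y) \<subseteq> ground (take a (X @ Y))"
      and "drop a (X @ Y) = drop (a - length X) Y" by auto
    then have "is_cut Y (a - length X)" using cut unfolding is_cut_def by auto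
    then have "a - length X \<in> cuts Y" using 3 a unfolding cuts_def by auto
    then show ?thesis using 3 by (auto intro: image_eqI[of _ _ "a - length X"])
  qed simp
qed

lemma is_cut_append:
  assumes "\<forall>x\<in>ground X. \<forall>y\<in>ground Y. x < y"
  shows "is_cut (X @ Y) (length X)" and "is_cut Y b \<Longrightarrow> is_cut (X @ Y) (length X + b)"
proof -
  show "is_cut (X @ Y) (length X)" using assms unfolding is_cut_def by simp
  assume "is_cut Y b"
  then show "is_cut (X @ Y) (length X + b)"
    using assms ground_drop_subset[of b Y] unfolding is_cut_def by (auto simp del: Union_iff)
qed

lemma initial_segment_eq_atLeastAtMost:
  assumes "A \<subseteq> {1..N}" "\<And>x y. x \<in> A \<Longrightarrow> 1 \<le> y \<Longrightarrow> y \<le> x \<Longrightarrow> y \<in> A"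
  shows "A = {1..card A}"
proof (cases "A = {}")
  case False
  have fin: "finite A" using assms(1) finite_subset by blast
  define M where "M = Max A"
  have "A \<subseteq> {1..M}" using Max_ge[OF fin] assms(1) unfolding M_def by auto
  moreover have "{1..M} \<subseteq> A" using assms(2)[OF Max_in[OF fin False]] unfolding M_def by auto
  ultimately have "A = {1..M}" by blast
  then show ?thesis by simp
qed simp

lemma Comp_split_at_cut:
  assumes "R \<in> Comp N" "is_cut R a"
  defines "m \<equiv> card (ground (take a R))"
  shows "ground (take a R) = {1..m}" "ground (drop a R) = {m+1..N}"
    "take a R \<in> Comp m" "R = take a R @ shift m (std (drop a R))"
proof -
  have un: "ground (take a R) \<union> ground (drop a R) = {1..N}"
    using assms(1) ground_take_Un_drop by (simp add: Comp_iff)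
  have disj: "ground (take a R) \<inter> ground (drop a R) = {}"
    using ground_take_drop_disjoint[OF assms(1)] .
  have "y \<in> ground (take a R)" if x: "x \<in> ground (take a R)" and y: "1 \<le> y" "y \<le> x" for x y
  proof -
    have "x \<in> {1..N}" using x un by blast
    then have "y \<in> {1..N}" using y by auto
    moreover have "y \<notin> ground (drop a R)" using assms(2) x y unfolding is_cut_def by fastforce
    ultimately show ?thesis using un by blast
  qed
  then show take: "ground (take a R) = {1..m}"
    unfolding m_def using un by (intro initial_segment_eq_atLeastAtMost[of _ N]) auto
  have "ground (drop a R) = {1..N} - {1..m}"
    using un disj take by blast
  also have "\<dots> = {m+1..N}" by auto
  finally show drop: "ground (drop a R) = {m+1..N}" .
  show "take a R \<in> Comp m"
    using take assms(1) valid_blocks_append[of "take a R" "drop a R"] by (simp add: Comp_iff)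
  have "m \<le> N" using card_ground_take_drop[OF assms(1), of a] unfolding m_def by simp
  then have "shift m (std (drop a R)) = drop a R"
    using drop by (intro shift_std_eq[where k = "N - m"]) simp
  then show "R = take a R @ shift m (std (drop a R))" by simp
qed

lemma is_cut_Comp_iff:
  assumes "P \<in> Comp n" "a < length P"
  shows "is_cut P a \<longleftrightarrow> (\<exists>m<n. ground (take a P) = {1..m})"
proof
  assume "is_cut P a"
  note split = Comp_split_at_cut[OF assms(1) this]
  have "P ! a \<in> set (drop a P)" using assms(2) by (metis Cons_nth_drop_Suc list.set_intros(1))
  moreover have "P ! a \<noteq> {}"
    using assms valid_blocks_nonempty[OF _ nth_mem] by (simp add: Comp_iff)
  ultimately have "ground (drop a P) \<noteq> {}" by blast
  then have "card (ground (take a P)) < n" using split(2) by auto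
  then show "\<exists>m<n. ground (take a P) = {1..m}" using split(1) by blast
next
  assume "\<exists>m<n. ground (take a P) = {1..m}"
  then obtain m where m: "ground (take a P) = {1..m}" by blast
  have "ground (drop a P) \<inter> {1..m} = {}" using ground_take_drop_disjoint[OF assms(1), of a] m by blast
  moreover have "ground (drop a P) \<subseteq> {1..n}"
    using assms(1) ground_drop_subset[of a P] by (simp add: Comp_iff)
  ultimately show "is_cut P a" unfolding is_cut_def m by fastforce
qed

lemma reduced_iff: "reduced n P \<longleftrightarrow> P \<in> Comp n \<and> cuts P = {}"
proof -
  have "(\<exists>a m. 1 \<le> a \<and> a < length P \<and> m < n \<and> ground (take a P) = {1..m}) \<longleftrightarrow> cuts P \<noteq> {}"
    if "P \<in> Comp n"
    using is_cut_Comp_iff[OF that] unfolding cuts_def by (auto simp: Suc_le_eq)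
  then show ?thesis unfolding reduced_def by blast
qed

lemma Gens_iff: "g \<in> Gens \<longleftrightarrow> g \<noteq> [] \<and> (\<exists>n. g \<in> Comp n) \<and> cuts g = {}"
  unfolding Gens_def reduced_iff by blast

lemma Gens_in_Comp: "g \<in> Gens \<Longrightarrow> \<exists>n. g \<in> Comp n"
  by (simp add: Gens_iff)

lemma is_cut_take:
  assumes "b \<le> a" "is_cut (take a R) b" "is_cut R a"
  shows "is_cut R b"
  unfolding is_cut_def
proof (intro ballI)
  fix x y assume x: "x \<in> ground (take b R)" and y: "y \<in> ground (drop b R)"
  have "drop b R = drop b (take a R) @ drop a R"
    using assms(1) by (metis append_take_drop_id drop_drop drop_take le_add_diff_inverse2)
  then consider "y \<in> ground (drop b (take a R))" | "y \<in> ground (drop a R)" using y by auto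
  then show "x < y"
  proof cases
    case 1
    have "take b (take a R) = take b R" using assms(1) by (simp add: min_def)
    then show ?thesis using assms(2) x 1 unfolding is_cut_def by metis
  next
    case 2
    have "ground (take b R) \<subseteq> ground (take a R)"
      using set_take_subset_set_take[OF assms(1)] by (rule Union_mono)
    then have "x \<in> ground (take a R)" using x by (rule subsetD)
    then show ?thesis using assms(3) 2 unfolding is_cut_def by blast
  qed
qed

section \<open>Factorization into reduced set compositions\<close>

fun concat_shift :: "nat set list list \<Rightarrow> nat set list" where
  "concat_shift [] = []"
| "concat_shift (g # w) = g @ shift (card (ground g)) (concat_shift w)"

definition num_factors :: "nat set list \<Rightarrow> nat" where
  "num_factors R = (if R = [] then 0 else Suc (card (cuts R)))"

lemma concat_shift_in_Comp:
  "\<forall>g\<in>set w. \<exists>n. g \<in> Comp n \<Longrightarrow> concat_shift w \<in> Comp (\<Sum>g\<leftarrow>w. card (ground g))"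
proof (induction w)
  case (Cons g w)
  obtain n where g: "g \<in> Comp n" using Cons.prems by auto
  let ?N = "\<Sum>g\<leftarrow>w. card (ground g)"
  have w: "concat_shift w \<in> Comp ?N" using Cons by simp
  have "valid_blocks (shift n (concat_shift w))"
    unfolding shift_def using w by (intro valid_blocks_map_image) (simp_all add: Comp_iff)
  then show ?case
    using g ground_shift_Comp[OF w, of n] by (auto simp: Comp_iff valid_blocks_append)
qed (simp add: Nil_in_Comp)

lemma concat_shift_eq_Nil_iff: "set w \<subseteq> Gens \<Longrightarrow> concat_shift w = [] \<longleftrightarrow> w = []"
  by (cases w) (auto simp: Gens_iff)

lemma cuts_concat_shift_Cons:
  assumes "g \<in> Gens" "set v \<subseteq> Gens" "v \<noteq> []"
  shows "cuts (concat_shift (g # v)) = insert (length g) ((+) (length g) ` cuts (concat_shift v))"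
proof -
  obtain n where g: "g \<noteq> []" "g \<in> Comp n" "cuts g = {}" using assms(1) Gens_iff by blast
  obtain k where v: "concat_shift v \<in> Comp k"
    using concat_shift_in_Comp assms(2) Gens_in_Comp by blast
  let ?Z = "shift (card (ground g)) (concat_shift v)"
  have v_ne: "concat_shift v \<noteq> []" using assms(2,3) concat_shift_eq_Nil_iff by blast
  have "\<forall>x\<in>ground g. \<forall>y\<in>ground ?Z. x < y"
    using ground_shift_Comp[OF v] g(2) by (simp add: Comp_iff)
  note cut = is_cut_append[OF this]
  show ?thesis
  proof
    show "cuts (concat_shift (g # v)) \<subseteq> insert (length g) ((+) (length g) ` cuts (concat_shift v))"
      using cuts_append_subset[of g ?Z] g(3) by (simp add: cuts_shift)
    show "insert (length g) ((+) (length g) ` cuts (concat_shift v)) \<subseteq> cuts (concat_shift (g # v))"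
    proof (rule insert_subsetI)
      show "length g \<in> cuts (concat_shift (g # v))" using cut(1) g(1) v_ne by (simp add: cuts_def)
      show "(+) (length g) ` cuts (concat_shift v) \<subseteq> cuts (concat_shift (g # v))"
      proof (rule image_subsetI)
        fix b assume "b \<in> cuts (concat_shift v)"
        then have "b \<in> cuts ?Z" by (simp add: cuts_shift)
        then show "length g + b \<in> cuts (concat_shift (g # v))" using cut(2) by (simp add: cuts_def)
      qed
    qed
  qed
qed

lemma num_factors_concat_shift: "set w \<subseteq> Gens \<Longrightarrow> num_factors (concat_shift w) = length w"
proof (induction w)
  case (Cons g v)
  then have g: "g \<noteq> []" "cuts g = {}" by (simp_all add: Gens_iff)
  show ?case
  proof (cases "v = []")
    case True
    then show ?thesis using g by (simp add: num_factors_def shift_def)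
  next
    case False
    have "length g \<notin> (+) (length g) ` cuts (concat_shift v)" using cuts_bounds by fastforce
    then have "card (cuts (concat_shift (g # v))) = Suc (card (cuts (concat_shift v)))"
      using cuts_concat_shift_Cons[of g v] Cons.prems False by (simp add: card_image)
    moreover have "concat_shift v \<noteq> []" using Cons.prems False concat_shift_eq_Nil_iff by simp
    ultimately show ?thesis
      using Cons g by (simp add: num_factors_def)
  qed
qed (simp add: num_factors_def)

definition first_cut :: "nat set list \<Rightarrow> nat" where
  "first_cut R = (if cuts R = {} then length R else Min (cuts R))"

lemma first_cut_concat_shift_Cons:
  assumes "g \<in> Gens" "set v \<subseteq> Gens"
  shows "first_cut (concat_shift (g # v)) = length g"
proof (cases "v = []")
  case True
  then show ?thesis using assms(1) by (simp add: first_cut_def shift_def Gens_iff)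
next
  case False
  have "\<forall>a\<in>(+) (length g) ` cuts (concat_shift v). length g \<le> a" by auto
  then show ?thesis
    using cuts_concat_shift_Cons[OF assms False] by (auto simp: first_cut_def intro: Min_eqI)
qed

lemma concat_shift_inj:
  assumes "set w \<subseteq> Gens" "set w' \<subseteq> Gens" "concat_shift w = concat_shift w'"
  shows "w = w'"
  using assms
proof (induction w arbitrary: w')
  case Nil
  then show ?case using concat_shift_eq_Nil_iff[of w'] by simp
next
  case (Cons g v)
  then have "w' \<noteq> []" using concat_shift_eq_Nil_iff[of "g # v"] by auto
  then obtain g' v' where w': "w' = g' # v'" by (cases w') auto
  have "length g = length g'"
    using Cons.prems first_cut_concat_shift_Cons[of g v] first_cut_concat_shift_Cons[of g' v'] w'
    by simp
  then have "g = g'" and "shift (card (ground g)) (concat_shift v) = shift (card (ground g)) (concat_shift v')"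
    using Cons.prems(3) unfolding w' by auto
  then show ?case using Cons shift_inj w' by auto
qed

lemma first_cut_bounds:
  assumes "R \<noteq> []"
  shows "0 < first_cut R" "first_cut R \<le> length R" "is_cut R (first_cut R)"
proof -
  have "0 < first_cut R \<and> first_cut R \<le> length R \<and> is_cut R (first_cut R)"
  proof (cases "cuts R = {}")
    case True
    then show ?thesis using assms unfolding first_cut_def is_cut_def by simp
  next
    case False
    then have "first_cut R \<in> cuts R" unfolding first_cut_def by simp
    then show ?thesis unfolding cuts_def by simp
  qed
  then show "0 < first_cut R" "first_cut R \<le> length R" "is_cut R (first_cut R)" by simp_all
qed

lemma take_first_cut_in_Gens:
  assumes "R \<in> Comp N" "R \<noteq> []"
  shows "take (first_cut R) R \<in> Gens"
proof -
  let ?a = "first_cut R"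
  note a = first_cut_bounds[OF assms(2)]
  have "cuts (take ?a R) = {}"
  proof (rule ccontr)
    assume "cuts (take ?a R) \<noteq> {}"
    then obtain b where b: "0 < b" "b < ?a" "is_cut (take ?a R) b"
      unfolding cuts_def by auto
    then have "b \<in> cuts R" using is_cut_take[OF _ b(3) a(3)] a(2) unfolding cuts_def by simp
    then show False using b(2) unfolding first_cut_def by (auto split: if_splits)
  qed
  moreover have "take ?a R \<noteq> []" using a assms(2) by simp
  ultimately show ?thesis using Comp_split_at_cut(3)[OF assms(1) a(3)] Gens_iff by blast
qed

lemma concat_shift_surj: "R \<in> Comp n \<Longrightarrow> \<exists>w. set w \<subseteq> Gens \<and> concat_shift w = R"
proof (induction "length R" arbitrary: R n rule: less_induct)
  case less
  show ?case
  proof (cases "R = []")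
    case False
    let ?a = "first_cut R"
    note a = first_cut_bounds[OF False]
    have "length (std (drop ?a R)) < length R" using a by simp
    then obtain v where v: "set v \<subseteq> Gens" "concat_shift v = std (drop ?a R)"
      using less std_drop_in_Comp[OF less.prems] by blast
    have "concat_shift (take ?a R # v) = R"
      using Comp_split_at_cut(4)[OF less.prems a(3)] v(2) by simp
    then show ?thesis
      using v(1) take_first_cut_in_Gens[OF less.prems False] by (intro exI[of _ "take ?a R # v"]) simp
  qed (intro exI[of _ "[]"], simp)
qed

section \<open>Products of reduced set compositions\<close>

fun is_word_shuffle :: "nat set list list \<Rightarrow> nat set list \<Rightarrow> bool" where
  "is_word_shuffle [] R \<longleftrightarrow> R = []"
| "is_word_shuffle (g # w) R \<longleftrightarrow>
     is_shuffle g (std (drop (length g) R)) R \<and> is_word_shuffle w (std (drop (length g) R))"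

lemma wprod_Nil [simp]: "wprod [] = sunit"
  by (simp add: wprod_def)

lemma wprod_Cons [simp]: "wprod (g # w) = sprod (basis g) (wprod w)"
  by (simp add: wprod_def)

lemma wprod_in_Tmod: "\<forall>g\<in>set w. \<exists>n. g \<in> Comp n \<Longrightarrow> wprod w \<in> Tmod"
  by (induction w) (auto intro: sprod_in_Tmod basis_in_Tmod sunit_in_Tmod)

lemma wprod_eq_indicator:
  assumes "\<forall>g\<in>set w. \<exists>n. g \<in> Comp n"
  shows "wprod w R = (if is_word_shuffle w R then 1 else 0)"
  using assms
proof (induction w arbitrary: R)
  case Nil
  then show ?case by (simp add: sunit_def basis_def)
next
  case (Cons g w)
  obtain n where g: "g \<in> Comp n" using Cons.prems by auto
  have IH: "wprod w Q = (if is_word_shuffle w Q then 1 else 0)" for Q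
    using Cons by simp
  let ?Y = "std (drop (length g) R)"
  have "wprod (g # w) R = (\<Sum>Q\<in>supp (wprod w). wprod w Q * shp g Q R)"
    unfolding wprod_Cons sprod_def supp_basis by (simp add: basis_def)
  also have "\<dots> = (\<Sum>Q\<in>supp (wprod w). if Q = ?Y then (if is_word_shuffle (g # w) R then 1 else 0) else 0)"
  proof (rule sum.cong[OF refl])
    fix Q assume "Q \<in> supp (wprod w)"
    then obtain q where "Q \<in> Comp q" using wprod_in_Tmod Cons.prems Tmod_supp_in_Comp by fastforce
    then have shp: "shp g Q R = (if is_shuffle g Q R then 1 else 0)"
      by (rule shp_eq_indicator[OF g])
    show "wprod w Q * shp g Q R = (if Q = ?Y then (if is_word_shuffle (g # w) R then 1 else 0) else 0)"
    proof (cases "Q = ?Y")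
      case True
      then show ?thesis using IH[of Q] shp by simp
    next
      case False
      then have "\<not> is_shuffle g Q R" unfolding is_shuffle_def by auto
      then show ?thesis using False shp by simp
    qed
  qed
  also have "\<dots> = (if is_word_shuffle (g # w) R then 1 else 0)"
    using wprod_in_Tmod[of w] Cons.prems IH[of ?Y] by (simp add: Tmod_iff supp_def)
  finally show ?case .
qed

lemma is_word_shuffle_in_Comp: "is_word_shuffle w R \<Longrightarrow> \<exists>N. R \<in> Comp N"
  by (cases w) (auto simp: is_shuffle_def intro: Nil_in_Comp)

lemma is_word_shuffle_concat_shift:
  "\<forall>g\<in>set w. \<exists>n. g \<in> Comp n \<Longrightarrow> is_word_shuffle w (concat_shift w)"
proof (induction w)
  case (Cons g w)
  obtain n where g: "g \<in> Comp n" using Cons.prems by auto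
  have w: "concat_shift w \<in> Comp (\<Sum>g\<leftarrow>w. card (ground g))"
    using Cons.prems by (simp add: concat_shift_in_Comp)
  have drop: "std (drop (length g) (concat_shift (g # w))) = concat_shift w"
    using std_shift[OF Comp_finite_ground[OF w]] Comp_std_eq[OF w] by simp
  have "is_shuffle g (concat_shift w) (concat_shift (g # w))"
    unfolding is_shuffle_def
    using concat_shift_in_Comp[OF Cons.prems] drop Comp_std_eq[OF g] by auto
  then show ?case using drop Cons by simp
qed simp

lemma cuts_subset_if_is_shuffle:
  assumes "g \<in> Gens" "is_shuffle g Y R"
  shows "cuts R \<subseteq> insert (length g) ((+) (length g) ` cuts Y)"
proof -
  obtain N where R: "R \<in> Comp N" "length R = length g + length Y"
      "std (take (length g) R) = g" "std (drop (length g) R) = Y"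
    using assms(2) unfolding is_shuffle_def by blast
  have fin: "finite (ground R)" using R(1) by (rule Comp_finite_ground)
  have "cuts (take (length g) R) = cuts (std (take (length g) R))"
    using cuts_std[OF finite_ground_take[OF fin]] by simp
  also have "\<dots> = {}" using R(3) assms(1) by (simp add: Gens_iff)
  finally have take: "cuts (take (length g) R) = {}" .
  have "cuts (drop (length g) R) = cuts (std (drop (length g) R))"
    using cuts_std[OF finite_ground_drop[OF fin]] by simp
  with R(4) have drop: "cuts (drop (length g) R) = cuts Y" by simp
  from take drop show ?thesis
    using cuts_append_subset[of "take (length g) R" "drop (length g) R"] R(2) by simp
qed

lemma card_cuts_le_num_factors:
  assumes "g \<in> Gens" "is_shuffle g Y R"
  shows "card (cuts R) \<le> num_factors Y \<and> (card (cuts R) = num_factors Y \<longrightarrow> is_cut R (length g))"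
proof -
  have length: "length R = length g + length Y" using assms(2) by (simp add: is_shuffle_def)
  note sub = cuts_subset_if_is_shuffle[OF assms]
  show ?thesis
  proof (cases "Y = []")
    case True
    then have "cuts R \<subseteq> {length g}" using sub by (simp add: cuts_def)
    moreover have "length g \<notin> cuts R" using True length by (simp add: cuts_def)
    ultimately have "cuts R = {}" by blast
    moreover have "is_cut R (length g)" using True length by (simp add: is_cut_def)
    ultimately show ?thesis using True by (simp add: num_factors_def)
  next
    case False
    have card_image: "card ((+) (length g) ` cuts Y) = card (cuts Y)"
      by (simp add: card_image)
    have "card (cuts R) \<le> card (insert (length g) ((+) (length g) ` cuts Y))"
      by (rule card_mono[OF _ sub]) simp
    also have "\<dots> \<le> num_factors Y"
      using False card_image by (simp add: num_factors_def card_insert_if)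
    finally have le: "card (cuts R) \<le> num_factors Y" .
    have lt: "card (cuts R) < num_factors Y" if "length g \<notin> cuts R"
    proof -
      have "card (cuts R) \<le> card ((+) (length g) ` cuts Y)"
        using sub that by (intro card_mono) auto
      then show ?thesis using False card_image by (simp add: num_factors_def)
    qed
    have "length g \<in> cuts R \<Longrightarrow> is_cut R (length g)" by (simp add: cuts_def)
    then show ?thesis using le lt by (metis less_irrefl)
  qed
qed

lemma num_factors_Cons_le:
  assumes "g \<in> Gens" "is_shuffle g Y R"
  shows "num_factors R \<le> Suc (num_factors Y)"
    and "num_factors R = Suc (num_factors Y) \<Longrightarrow> R = g @ shift (card (ground g)) Y"
proof -
  obtain N where R: "R \<in> Comp N" "length R = length g + length Y"
      "std (take (length g) R) = g" "std (drop (length g) R) = Y"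
    using assms(2) unfolding is_shuffle_def by blast
  have "R \<noteq> []" using assms(1) R(2) by (auto simp: Gens_iff)
  then have nu: "num_factors R = Suc (card (cuts R))" by (simp add: num_factors_def)
  note card_cuts = card_cuts_le_num_factors[OF assms]
  show "num_factors R \<le> Suc (num_factors Y)" using nu card_cuts by simp
  assume "num_factors R = Suc (num_factors Y)"
  then have cut: "is_cut R (length g)" using nu card_cuts by simp
  have "take (length g) R = g"
    using Comp_std_eq[OF Comp_split_at_cut(3)[OF R(1) cut]] R(3) by simp
  then show "R = g @ shift (card (ground g)) Y"
    using Comp_split_at_cut(4)[OF R(1) cut] R(4) by simp
qed

lemma is_word_shuffle_num_factors:
  assumes "set w \<subseteq> Gens" "is_word_shuffle w R"
  shows "R = concat_shift w \<or> num_factors R < length w"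
  using assms
proof (induction w arbitrary: R)
  case (Cons g v)
  let ?Y = "std (drop (length g) R)"
  have g: "g \<in> Gens" and v: "set v \<subseteq> Gens" using Cons.prems(1) by auto
  have shuffle: "is_shuffle g ?Y R" and IH: "?Y = concat_shift v \<or> num_factors ?Y < length v"
    using Cons by auto
  show ?case
  proof (cases "num_factors R = Suc (num_factors ?Y)")
    case True
    then have "R = g @ shift (card (ground g)) ?Y" by (rule num_factors_Cons_le(2)[OF g shuffle])
    then show ?thesis using IH True by auto
  next
    case False
    then have "num_factors R \<le> num_factors ?Y" using num_factors_Cons_le(1)[OF g shuffle] by simp
    moreover have "num_factors ?Y \<le> length v" using IH num_factors_concat_shift[OF v] by auto
    ultimately show ?thesis by simp
  qed
qed (simp add: num_factors_def)

theorem wprod_concat_shift: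
  assumes "set w \<subseteq> Gens" "set w' \<subseteq> Gens" "length w' \<le> length w"
  shows "wprod w' (concat_shift w) = (if w' = w then 1 else 0)"
proof -
  have "is_word_shuffle w' (concat_shift w) \<longleftrightarrow> w' = w"
  proof
    assume "is_word_shuffle w' (concat_shift w)"
    then have "concat_shift w = concat_shift w' \<or> num_factors (concat_shift w) < length w'"
      by (rule is_word_shuffle_num_factors[OF assms(2)])
    then have "concat_shift w = concat_shift w' \<or> length w < length w'"
      using num_factors_concat_shift[OF assms(1)] by simp
    then show "w' = w" using concat_shift_inj[OF assms(1,2)] assms(3) by auto
  next
    assume "w' = w"
    then show "is_word_shuffle w' (concat_shift w)"
      using is_word_shuffle_concat_shift Gens_in_Comp assms(1) by blast
  qed
  moreover have "\<forall>g\<in>set w'. \<exists>n. g \<in> Comp n" using assms(2) Gens_in_Comp by blast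
  ultimately show ?thesis using wprod_eq_indicator[of w' "concat_shift w"] by simp
qed

section \<open>Freeness\<close>

lemma Words_iff: "c \<in> Words \<longleftrightarrow> finite (supp c) \<and> (\<forall>w\<in>supp c. set w \<subseteq> Gens)"
  unfolding Words_def supp_def by blast

lemma Phi_conv_sum:
  assumes "finite W" "supp c \<subseteq> W"
  shows "Phi c R = (\<Sum>w\<in>W. c w * wprod w R)"
  unfolding Phi_def by (rule sum.mono_neutral_left[OF assms]) (auto simp: supp_def)

lemma Phi_in_Tmod:
  assumes "c \<in> Words"
  shows "Phi c \<in> Tmod"
proof -
  have "wprod w \<in> Tmod" if "w \<in> supp c" for w
    using that assms Gens_in_Comp by (intro wprod_in_Tmod) (auto simp: Words_iff)
  then show ?thesis
    unfolding Phi_def using assms by (intro Tmod_sum Tmod_scale) (simp_all add: Words_iff)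
qed

lemma inj_on_Phi: "inj_on Phi Words"
proof (rule inj_onI)
  fix c1 c2 assume c1: "c1 \<in> Words" and c2: "c2 \<in> Words" and eq: "Phi c1 = Phi c2"
  show "c1 = c2"
  proof (rule ccontr)
    assume "c1 \<noteq> c2"
    let ?W = "supp c1 \<union> supp c2" and ?D = "{w. c1 w \<noteq> c2 w}"
    have fin: "finite ?W" and gens: "\<forall>w\<in>?W. set w \<subseteq> Gens"
      using c1 c2 by (auto simp: Words_iff)
    have D: "?D \<subseteq> ?W" "?D \<noteq> {}" using \<open>c1 \<noteq> c2\<close> by (auto simp: supp_def)
    then have fin_D: "finite (length ` ?D)" using finite_subset[OF _ fin] by blast
    then have "Max (length ` ?D) \<in> length ` ?D" using D(2) by simp
    then obtain w where "w \<in> ?D" "length w = Max (length ` ?D)" by auto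
    then have w: "w \<in> ?D" "\<forall>w'\<in>?D. length w' \<le> length w" using fin_D by auto
    \<comment> \<open>as \<open>w\<close> has maximal length, only the word \<open>w\<close> itself contributes at \<open>concat_shift w\<close>\<close>
    have "0 = Phi c1 (concat_shift w) - Phi c2 (concat_shift w)" using eq by simp
    also have "\<dots> = (\<Sum>w'\<in>?W. (c1 w' - c2 w') * wprod w' (concat_shift w))"
      using Phi_conv_sum[OF fin, of c1] Phi_conv_sum[OF fin, of c2]
      by (simp add: sum_subtractf left_diff_distrib)
    also have "\<dots> = (\<Sum>w'\<in>?W. if w' = w then c1 w - c2 w else 0)"
    proof (rule sum.cong[OF refl])
      fix w' assume "w' \<in> ?W"
      show "(c1 w' - c2 w') * wprod w' (concat_shift w) = (if w' = w then c1 w - c2 w else 0)"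
      proof (cases "w' \<in> ?D")
        case True
        then show ?thesis
          using wprod_concat_shift[of w w'] gens w D(1) \<open>w' \<in> ?W\<close> by auto
      qed (use w in auto)
    qed
    also have "\<dots> = c1 w - c2 w" using fin w(1) D(1) by auto
    finally show False using w(1) by simp
  qed
qed

lemma Phi_lincomb:
  assumes "finite I" "\<And>i. i \<in> I \<Longrightarrow> c i \<in> Words"
  shows "(\<lambda>w. \<Sum>i\<in>I. k i * c i w) \<in> Words"
    and "Phi (\<lambda>w. \<Sum>i\<in>I. k i * c i w) = (\<lambda>R. \<Sum>i\<in>I. k i * Phi (c i) R)"
proof -
  let ?c = "\<lambda>w. \<Sum>i\<in>I. k i * c i w" and ?W = "\<Union>i\<in>I. supp (c i)"
  have fin: "finite ?W" using assms by (simp add: Words_iff)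
  have "supp ?c \<subseteq> (\<Union>i\<in>I. supp (\<lambda>w. k i * c i w))" by (rule supp_sum_subset)
  also have "\<dots> \<subseteq> ?W" by (intro UN_mono order_refl supp_scale_subset)
  finally have sub: "supp ?c \<subseteq> ?W" .
  have "\<forall>w\<in>?W. set w \<subseteq> Gens" using assms(2) by (auto simp: Words_iff)
  then show "?c \<in> Words"
    unfolding Words_iff using finite_subset[OF sub fin] sub by blast
  show "Phi ?c = (\<lambda>R. \<Sum>i\<in>I. k i * Phi (c i) R)"
  proof
    fix R
    have "Phi ?c R = (\<Sum>w\<in>?W. \<Sum>i\<in>I. k i * (c i w * wprod w R))"
      using Phi_conv_sum[OF fin sub] by (simp add: sum_distrib_right mult.assoc)
    also have "\<dots> = (\<Sum>i\<in>I. \<Sum>w\<in>?W. k i * (c i w * wprod w R))"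
      by (rule sum.swap)
    also have "\<dots> = (\<Sum>i\<in>I. k i * Phi (c i) R)"
    proof (rule sum.cong[OF refl])
      fix i assume "i \<in> I"
      then have "supp (c i) \<subseteq> ?W" by blast
      then show "(\<Sum>w\<in>?W. k i * (c i w * wprod w R)) = k i * Phi (c i) R"
        using Phi_conv_sum[OF fin] by (simp add: sum_distrib_left)
    qed
    finally show "Phi ?c R = (\<Sum>i\<in>I. k i * Phi (c i) R)" .
  qed
qed

lemma lincomb_in_Phi_image:
  assumes "finite I" "\<And>i. i \<in> I \<Longrightarrow> F i \<in> Phi ` Words"
  shows "(\<lambda>R. \<Sum>i\<in>I. k i * F i R) \<in> Phi ` Words"
proof -
  have "\<forall>i\<in>I. \<exists>c. c \<in> Words \<and> F i = Phi c" using assms(2) by blast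
  then obtain c where c: "\<And>i. i \<in> I \<Longrightarrow> c i \<in> Words \<and> F i = Phi (c i)"
    using bchoice by meson
  then have "(\<lambda>R. \<Sum>i\<in>I. k i * F i R) = Phi (\<lambda>w. \<Sum>i\<in>I. k i * c i w)"
    using Phi_lincomb(2)[OF assms(1)] by simp
  then show ?thesis using Phi_lincomb(1)[OF assms(1)] c by blast
qed

lemma wprod_in_Phi_image:
  assumes "set w \<subseteq> Gens"
  shows "wprod w \<in> Phi ` Words"
proof
  let ?c = "\<lambda>w'. if w' = w then 1 else 0 :: int"
  have "supp ?c = {w}" by (simp add: supp_def)
  then show "?c \<in> Words" "wprod w = Phi ?c" using assms by (simp_all add: Words_iff Phi_def)
qed

lemma basis_in_Phi_image: "R \<in> Comp n \<Longrightarrow> basis R \<in> Phi ` Words"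
proof (induction "num_factors R" arbitrary: R n rule: less_induct)
  case less
  obtain w where w: "set w \<subseteq> Gens" "concat_shift w = R" using concat_shift_surj[OF less.prems] by blast
  have comps: "\<forall>g\<in>set w. \<exists>n. g \<in> Comp n" using w(1) Gens_in_Comp by blast
  let ?S = "supp (wprod w)"
  have fin: "finite ?S" using wprod_in_Tmod[OF comps] by (simp add: Tmod_iff)
  have S: "?S = {R'. is_word_shuffle w R'}" using wprod_eq_indicator[OF comps] by (simp add: supp_def)
  have R: "R \<in> ?S" using is_word_shuffle_concat_shift[OF comps] w(2) S by simp
  have IH: "basis R' \<in> Phi ` Words" if "R' \<in> ?S - {R}" for R'
  proof -
    have "is_word_shuffle w R'" "R' \<noteq> concat_shift w" using that S w(2) by auto
    then have "num_factors R' < num_factors R"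
      using is_word_shuffle_num_factors[OF w(1)] num_factors_concat_shift[OF w(1)] w(2) by auto
    moreover obtain N where "R' \<in> Comp N" using is_word_shuffle_in_Comp \<open>is_word_shuffle w R'\<close> by blast
    ultimately show ?thesis using less.hyps by blast
  qed
  \<comment> \<open>\<open>basis R\<close> is \<open>wprod w\<close> minus the basis elements of its other terms\<close>
  let ?F = "\<lambda>R'. if R' = R then wprod w else basis R'" and ?k = "\<lambda>R'. if R' = R then 1 else -1"
  have "basis R = (\<lambda>x. \<Sum>R'\<in>?S. ?k R' * ?F R' x)"
  proof
    fix x
    have "(\<Sum>R'\<in>?S. ?k R' * ?F R' x) = wprod w x - (\<Sum>R'\<in>?S - {R}. basis R' x)"
      using fin R by (simp add: sum.remove sum_negf)
    also have "\<dots> = basis R x"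
      using fin R wprod_eq_indicator[OF comps] S by (auto simp: basis_def)
    finally show "basis R x = (\<Sum>R'\<in>?S. ?k R' * ?F R' x)" ..
  qed
  also have "\<dots> \<in> Phi ` Words"
    using fin IH wprod_in_Phi_image[OF w(1)] by (intro lincomb_in_Phi_image) auto
  finally show ?case .
qed

lemma Tmod_subset_Phi_image: "Tmod \<subseteq> Phi ` Words"
proof
  fix f assume f: "f \<in> Tmod"
  have "f = (\<lambda>x. \<Sum>R\<in>supp f. f R * basis R x)"
  proof
    fix x
    have "(\<Sum>R\<in>supp f. f R * basis R x) = (\<Sum>R\<in>supp f. if R = x then f x else 0)"
      by (rule sum.cong) (auto simp: basis_def)
    also have "\<dots> = f x" using f by (simp add: Tmod_iff supp_def)
    finally show "f x = (\<Sum>R\<in>supp f. f R * basis R x)" ..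
  qed
  also have "\<dots> \<in> Phi ` Words"
    using f Tmod_supp_in_Comp basis_in_Phi_image by (intro lincomb_in_Phi_image) (auto simp: Tmod_iff)
  finally show "f \<in> Phi ` Words" .
qed

theorem theorem3p4:
  shows "sunit \<in> Tmod
    \<and> (\<forall>f\<in>Tmod. \<forall>g\<in>Tmod. sprod f g \<in> Tmod)
    \<and> (\<forall>f\<in>Tmod. sprod sunit f = f \<and> sprod f sunit = f)
    \<and> (\<forall>f\<in>Tmod. \<forall>g\<in>Tmod. \<forall>h\<in>Tmod. sprod (sprod f g) h = sprod f (sprod g h))
    \<and> bij_betw Phi Words Tmod"
proof -
  have "Phi ` Words = Tmod" using Phi_in_Tmod Tmod_subset_Phi_image by blast
  then have "bij_betw Phi Words Tmod" using inj_on_Phi by (simp add: bij_betw_def)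
  then show ?thesis
    by (simp add: sunit_in_Tmod sprod_in_Tmod sprod_sunit_left sprod_sunit_right sprod_assoc)
qed

end
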